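(* Let $\mathcal I\neq\mathrm{Fin}$ be an ideal on $\mathbb N$ for which there exists an infinite set $E\subset\mathbb N$ such that: (I) no infinite subset of $E$ belongs to $\mathcal I$; (II) $\sup\{e_{n+1}-e_n\colon n\in\mathbb N\}<\infty$, where $(e_n)_{n\in\mathbb N}$ is the increasing enumeration of $E$. Then for each normed space $X$ and every divergent series $\sum_n x_n$ in $X$ which is $\mathcal I$-convergent, the set $$A(\mathcal I):=\left\{t \in \{0,1\}^{\mathbb N} \colon \sum_n t(n)x_n \text{ is } \mathcal I\text{-convergent}\right\}$$ satisfies $\lambda(A(\mathcal I))=0$.
   Context: $\mathbb N=\{1,2,\dots\}$; $\mathrm{Fin}$ denotes the ideal of finite subsets of $\mathbb N$. An ideal on $\mathbb N$ is a family $\mathcal I\subset\mathcal P(\mathbb N)$ closed under finite unions and subsets, with $\mathbb N\notin\mathcal I$ and $\mathrm{Fin}\subset\mathcal I$. A sequence $(y_n)$ in a normed space is $\mathcal I$-convergent to $y$ if $\{n:\|y_n-y\|>\varepsilon\}\in\mathcal I$ for every $\varepsilon>0$; a series is $\mathcal I$-convergent if its sequence of partial sums is $\mathcal I$-convergent to some element. $\lambda$ is the product probability measure on $\{0,1\}^{\mathbb N}$ generated by the measure giving mass $1/2$ to each of $0$ and $1$. Normed spaces are over $\mathbb R$. *)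

theory Defs
  imports "HOL-Probability.Probability"
begin

text \<open>Ideals on the index set (natural numbers, 0-based reindexing of {1,2,...}).\<close>
definition is_ideal :: "nat set set \<Rightarrow> bool" where
  "is_ideal I \<longleftrightarrow>
     (\<forall>A\<in>I. \<forall>B\<in>I. A \<union> B \<in> I) \<and>
     (\<forall>A\<in>I. \<forall>B. B \<subseteq> A \<longrightarrow> B \<in> I) \<and>
     UNIV \<notin> I \<and>
     {A. finite A} \<subseteq> I"

definition Fin_ideal :: "nat set set" where
  "Fin_ideal = {A. finite A}"

definition I_convergent_to :: "nat set set \<Rightarrow> (nat \<Rightarrow> 'a::real_normed_vector) \<Rightarrow> 'a \<Rightarrow> bool" where
  "I_convergent_to I y L \<longleftrightarrow> (\<forall>\<epsilon>>0. {n. norm (y n - L) > \<epsilon>} \<in> I)"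

definition I_convergent :: "nat set set \<Rightarrow> (nat \<Rightarrow> 'a::real_normed_vector) \<Rightarrow> bool" where
  "I_convergent I y \<longleftrightarrow> (\<exists>L. I_convergent_to I y L)"

definition partial_sums :: "(nat \<Rightarrow> 'a::real_normed_vector) \<Rightarrow> nat \<Rightarrow> 'a" where
  "partial_sums x n = (\<Sum>i\<le>n. x i)"

definition series_I_convergent :: "nat set set \<Rightarrow> (nat \<Rightarrow> 'a::real_normed_vector) \<Rightarrow> bool" where
  "series_I_convergent I x \<longleftrightarrow> I_convergent I (partial_sums x)"

text \<open>The Cantor measure lambda on {0,1}^N (0/1 encoded as False/True).\<close>
definition cantor_measure :: "(nat \<Rightarrow> bool) measure" where
  "cantor_measure = PiM UNIV (\<lambda>_. measure_pmf (bernoulli_pmf (1/2)))"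

definition A_set :: "nat set set \<Rightarrow> (nat \<Rightarrow> 'a::real_normed_vector) \<Rightarrow> (nat \<Rightarrow> bool) set" where
  "A_set I x = {t. series_I_convergent I (\<lambda>n. (if t n then 1 else 0) *\<^sub>R x n)}"

end

theory Submission
  imports Defs
begin

text \<open>Fix an index set \<open>E\<close> as in the hypothesis. \<open>\<I>\<close>-convergence of the partial sums forces
  ordinary convergence along \<open>E\<close>; since the gaps of \<open>E\<close> are bounded, the divergent series
  cannot have \<open>x\<^sub>n \<rightarrow> 0\<close>, so infinitely many terms have norm at least some \<open>\<delta> > 0\<close>.
  Choose infinitely many pairwise disjoint blocks \<open>(a\<^sub>j, b\<^sub>j]\<close> with endpoints in \<open>E\<close>, each
  containing an index \<open>g\<^sub>j\<close> with \<open>\<parallel>x\<^sub>g\<^sub>j\<parallel> \<ge> \<delta>\<close>. For \<open>t \<in> A(\<I>)\<close> the selected block sums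
  \<open>\<Sum>\<^bsub>n\<in>(a\<^sub>j,b\<^sub>j]\<^esub> t(n) x\<^sub>n\<close> tend to \<open>0\<close>. But flipping the coordinate \<open>t(g\<^sub>j)\<close> is measure
  preserving and changes the \<open>j\<close>-th block sum by \<open>\<pm>x\<^sub>g\<^sub>j\<close>, leaving the other blocks alone,
  so each block sum is below \<open>\<delta>/2\<close> with conditional probability at most \<open>1/2\<close>; hence
  the block sums are eventually below \<open>\<delta>/2\<close> only on a null set.\<close>

lemma space_cantor_measure [simp]: "space cantor_measure = UNIV"
  by (simp add: cantor_measure_def space_PiM)

lemma prob_space_cantor_measure: "prob_space cantor_measure"
  unfolding cantor_measure_def by (rule prob_space_PiM) (simp add: prob_space_measure_pmf)

lemma measurable_cantor_coordinate:
  "(\<lambda>t. t k) \<in> measurable cantor_measure (count_space UNIV)"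
  unfolding cantor_measure_def
  using measurable_component_singleton[of k UNIV "\<lambda>_. measure_pmf (bernoulli_pmf (1/2))"]
  by (simp add: measurable_pmf_measure2)

lemma sets_cantor_measure_finitely_determined:
  assumes "finite W" and determined: "\<And>t. P t = P (restrict t W)"
  shows "{t. P t} \<in> sets cantor_measure"
proof -
  have [measurable]: "(\<lambda>t. t k) \<in> measurable cantor_measure (count_space UNIV)" for k
    by (rule measurable_cantor_coordinate)
  have cylinder: "{t \<in> space cantor_measure. \<forall>k\<in>W. t k = s k} \<in> sets cantor_measure" for s
    using \<open>finite W\<close> by measurable
  let ?S = "{s \<in> PiE W (\<lambda>_. UNIV). P s}"
  have "finite ?S"
    using \<open>finite W\<close> by (intro finite_subset[OF _ finite_PiE[of W "\<lambda>_. UNIV::bool set"]]) auto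
  moreover have "{t. P t} = (\<Union>s\<in>?S. {t \<in> space cantor_measure. \<forall>k\<in>W. t k = s k})"
  proof (intro equalityI subsetI)
    fix t assume "t \<in> {t. P t}"
    then show "t \<in> (\<Union>s\<in>?S. {t \<in> space cantor_measure. \<forall>k\<in>W. t k = s k})"
      using determined[of t] by (intro UN_I[of "restrict t W"]) auto
  next
    fix t assume "t \<in> (\<Union>s\<in>?S. {t \<in> space cantor_measure. \<forall>k\<in>W. t k = s k})"
    then obtain s where "s \<in> ?S" "\<forall>k\<in>W. t k = s k" by auto
    then have "restrict t W = s" by (auto simp: PiE_iff restrict_def fun_eq_iff extensional_def)
    with \<open>s \<in> ?S\<close> determined[of t] show "t \<in> {t. P t}" by auto
  qed
  ultimately show ?thesis using cylinder by (simp only:) (intro sets.finite_UN)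
qed

definition flip_at :: "nat \<Rightarrow> (nat \<Rightarrow> bool) \<Rightarrow> nat \<Rightarrow> bool" where
  "flip_at i t = t(i := \<not> t i)"

lemma measurable_flip_at: "flip_at i \<in> measurable cantor_measure cantor_measure"
  unfolding cantor_measure_def flip_at_def
  by (rule measurable_PiM_single') (auto simp: space_PiM)

lemma emeasure_bernoulli_half_image_Not:
  "emeasure (measure_pmf (bernoulli_pmf (1/2))) (Not ` F) =
   emeasure (measure_pmf (bernoulli_pmf (1/2))) F"
proof -
  have emeasure_card: "emeasure (measure_pmf (bernoulli_pmf (1/2))) S = ennreal (card S / 2)" for S
    using emeasure_measure_pmf_finite[of S "bernoulli_pmf (1/2)"] by simp
  have "card (Not ` F) = card F" by (rule card_image) (auto simp: inj_on_def)
  then show ?thesis by (simp add: emeasure_card)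
qed

lemma distr_flip_at_cantor_measure:
  "distr cantor_measure cantor_measure (flip_at i) = cantor_measure"
proof -
  let ?M = "\<lambda>_::nat. measure_pmf (bernoulli_pmf (1/2))"
  interpret product_prob_space ?M UNIV
    by (rule product_prob_spaceI) (simp add: prob_space_measure_pmf)
  show ?thesis unfolding cantor_measure_def
  proof (rule PiM_eq)
    fix J F assume J: "finite J" and F: "\<And>j. j \<in> J \<Longrightarrow> F j \<in> sets (?M j)"
    define F' where "F' j = (if j = i then Not ` F j else F j)" for j
    have pointwise: "flip_at i t j \<in> F j \<longleftrightarrow> t j \<in> F' j" for t j
      by (cases "j = i") (force simp: flip_at_def F'_def)+
    have preimage: "flip_at i -` prod_emb UNIV ?M J (Pi\<^sub>E J F) \<inter> space (Pi\<^sub>M UNIV ?M)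
        = prod_emb UNIV ?M J (Pi\<^sub>E J F')"
      unfolding prod_emb_def by (auto simp: space_PiM PiE_iff pointwise)
    have "emeasure (distr (Pi\<^sub>M UNIV ?M) (Pi\<^sub>M UNIV ?M) (flip_at i)) (prod_emb UNIV ?M J (Pi\<^sub>E J F))
        = emeasure (Pi\<^sub>M UNIV ?M) (prod_emb UNIV ?M J (Pi\<^sub>E J F'))"
      unfolding preimage[symmetric] using J F measurable_flip_at[unfolded cantor_measure_def]
      by (intro emeasure_distr sets_PiM_I) auto
    also have "\<dots> = (\<Prod>j\<in>J. emeasure (?M j) (F' j))"
      using J by (intro emeasure_PiM_emb) auto
    also have "\<dots> = (\<Prod>j\<in>J. emeasure (?M j) (F j))"
      by (rule prod.cong) (auto simp: F'_def emeasure_bernoulli_half_image_Not)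
    finally show "emeasure (distr (Pi\<^sub>M UNIV ?M) (Pi\<^sub>M UNIV ?M) (flip_at i))
        (prod_emb UNIV ?M J (Pi\<^sub>E J F)) = (\<Prod>j\<in>J. emeasure (?M j) (F j))" .
  qed simp
qed

definition block_sum :: "(nat \<Rightarrow> 'a::real_normed_vector) \<Rightarrow> nat set \<Rightarrow> (nat \<Rightarrow> bool) \<Rightarrow> 'a" where
  "block_sum x W t = (\<Sum>k\<in>W. (if t k then 1 else 0) *\<^sub>R x k)"

lemma block_sum_cong: "(\<And>k. k \<in> W \<Longrightarrow> t k = t' k) \<Longrightarrow> block_sum x W t = block_sum x W t'"
  unfolding block_sum_def by (intro sum.cong) auto

lemma block_sum_flip_at:
  assumes "finite W" "i \<in> W"
  shows "block_sum x W (flip_at i t) - block_sum x W t = ((if t i then -1 else 1)::real) *\<^sub>R x i"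
proof -
  have split: "block_sum x W s = (if s i then 1 else 0) *\<^sub>R x i + block_sum x (W - {i}) s" for s
    unfolding block_sum_def using assms by (simp add: sum.remove)
  have "block_sum x (W - {i}) (flip_at i t) = block_sum x (W - {i}) t"
    by (rule block_sum_cong) (auto simp: flip_at_def)
  then show ?thesis by (simp add: split flip_at_def algebra_simps)
qed

lemma sets_small_block_sums:
  assumes "finite J" "\<And>j. finite (W j)"
  shows "{t. \<forall>j\<in>J. norm (block_sum x (W j) t) < r} \<in> sets cantor_measure"
  using assms
  by (intro sets_cantor_measure_finitely_determined[of "\<Union>j\<in>J. W j"] ball_cong
      arg_cong[where f="\<lambda>v. norm v < r"] block_sum_cong) auto

text \<open>Flipping the pivot \<open>g j\<close> maps the event for \<open>insert j J\<close> to a disjoint event of the same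
  measure, both inside the event for \<open>J\<close>.\<close>

lemma measure_small_block_sums_le:
  assumes finW: "\<And>j. finite (W j)" and pivot_in: "\<And>j. g j \<in> W j"
    and pivot_notin: "\<And>j j'. j \<noteq> j' \<Longrightarrow> g j \<notin> W j'" and big: "\<And>j. \<delta> \<le> norm (x (g j))"
    and "finite J"
  shows "measure cantor_measure {t. \<forall>j\<in>J. norm (block_sum x (W j) t) < \<delta>/2} \<le> (1/2) ^ card J"
  using \<open>finite J\<close>
proof (induction J rule: finite_induct)
  interpret prob_space cantor_measure by (rule prob_space_cantor_measure)
  case empty
  show ?case by simp
next
  interpret prob_space cantor_measure by (rule prob_space_cantor_measure)
  case (insert j J)
  define C where "C = {t. \<forall>j\<in>J. norm (block_sum x (W j) t) < \<delta>/2}"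
  define X where "X = {t. \<forall>j\<in>insert j J. norm (block_sum x (W j) t) < \<delta>/2}"
  define Y where "Y = flip_at (g j) -` X"
  have X: "X \<in> sets cantor_measure" and C: "C \<in> sets cantor_measure"
    unfolding X_def C_def using insert.hyps finW by (blast intro: sets_small_block_sums)+
  have Y: "Y \<in> sets cantor_measure"
    using measurable_sets[OF measurable_flip_at X] by (simp add: Y_def)
  have "measure cantor_measure Y = measure cantor_measure X"
    using measure_distr[OF measurable_flip_at X, of "g j"]
    by (simp add: distr_flip_at_cantor_measure Y_def)
  moreover have "X \<subseteq> C" unfolding X_def C_def by auto
  moreover have "Y \<subseteq> C"
  proof
    fix t assume "t \<in> Y"
    have "block_sum x (W j') (flip_at (g j) t) = block_sum x (W j') t" if "j' \<in> J" for j'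
      using that insert.hyps pivot_notin[of j j'] by (intro block_sum_cong) (auto simp: flip_at_def)
    with \<open>t \<in> Y\<close> show "t \<in> C" by (auto simp: Y_def X_def C_def)
  qed
  moreover have "X \<inter> Y = {}"
  proof (rule ccontr)
    assume "X \<inter> Y \<noteq> {}"
    then obtain t where "norm (block_sum x (W j) t) < \<delta>/2"
        "norm (block_sum x (W j) (flip_at (g j) t)) < \<delta>/2"
      by (auto simp: X_def Y_def)
    moreover have "norm (block_sum x (W j) (flip_at (g j) t) - block_sum x (W j) t) = norm (x (g j))"
      by (simp add: block_sum_flip_at[OF finW pivot_in])
    ultimately show False
      using norm_triangle_ineq4[of "block_sum x (W j) (flip_at (g j) t)" "block_sum x (W j) t"] big[of j]
      by linarith
  qed
  then have "measure cantor_measure X + measure cantor_measure Y = measure cantor_measure (X \<union> Y)"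
    using finite_measure_Union[OF X Y] by simp
  ultimately have "2 * measure cantor_measure X \<le> measure cantor_measure C"
    using finite_measure_mono[OF _ C, of "X \<union> Y"] by simp
  with insert.IH insert.hyps show ?case by (simp add: X_def C_def)
qed

lemma null_sets_eventually_small_block_sums:
  assumes finW: "\<And>j. finite (W j)" and pivot_in: "\<And>j. g j \<in> W j"
    and pivot_notin: "\<And>j j'. j \<noteq> j' \<Longrightarrow> g j \<notin> W j'" and big: "\<And>j. \<delta> \<le> norm (x (g j))"
  shows "{t. \<forall>\<^sub>F j in sequentially. norm (block_sum x (W j) t) < \<delta>/2} \<in> null_sets cantor_measure"
proof -
  interpret prob_space cantor_measure by (rule prob_space_cantor_measure)
  define S where "S K M = {t. \<forall>j\<in>{K..<K+M}. norm (block_sum x (W j) t) < \<delta>/2}" for K M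
  define D where "D K = {t. \<forall>j\<ge>K. norm (block_sum x (W j) t) < \<delta>/2}" for K
  have S: "S K M \<in> sets cantor_measure" for K M
    unfolding S_def using finW by (intro sets_small_block_sums) auto
  have "D K \<in> null_sets cantor_measure" for K
  proof -
    have "D K = (\<Inter>M. S K M)"
    proof (intro equalityI subsetI)
      fix t assume "t \<in> (\<Inter>M. S K M)"
      have "norm (block_sum x (W j) t) < \<delta>/2" if "K \<le> j" for j
        using INT_D[OF \<open>t \<in> (\<Inter>M. S K M)\<close>, of "Suc j"] that by (simp add: S_def)
      then show "t \<in> D K" by (simp add: D_def)
    qed (auto simp: S_def D_def)
    then have D: "D K \<in> sets cantor_measure" using S by auto
    have "measure cantor_measure (D K) \<le> (1/2) ^ M" for M
    proof -
      have "measure cantor_measure (D K) \<le> measure cantor_measure (S K M)"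
        using S by (intro finite_measure_mono) (auto simp: S_def D_def)
      also have "\<dots> \<le> (1/2) ^ M"
        unfolding S_def
        using measure_small_block_sums_le[where W=W and g=g and x=x and \<delta>=\<delta> and J="{K..<K+M}"]
          finW pivot_in pivot_notin big
        by simp
      finally show ?thesis .
    qed
    then have "measure cantor_measure (D K) \<le> 0"
      by (intro LIMSEQ_le_const[OF LIMSEQ_realpow_zero[of "1/2"]]) auto
    with D show ?thesis by (simp add: emeasure_eq_measure null_setsI measure_le_0_iff)
  qed
  moreover have "{t. \<forall>\<^sub>F j in sequentially. norm (block_sum x (W j) t) < \<delta>/2} = (\<Union>K. D K)"
    unfolding D_def eventually_sequentially by blast
  ultimately show ?thesis by auto
qed

lemma partial_sums_split:
  assumes "m \<le> n"
  shows "partial_sums f n = partial_sums f m + sum f {m<..n}"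
proof -
  have "{..n} = {..m} \<union> {m<..n}" using assms by auto
  then show ?thesis unfolding partial_sums_def by (simp add: sum.union_disjoint ivl_disj_int)
qed

lemma tendsto_along_if_I_convergent_to:
  assumes "is_ideal I" and no_infinite: "\<forall>F. F \<subseteq> E \<and> infinite F \<longrightarrow> F \<notin> I"
    and "I_convergent_to I y L"
  shows "(y \<longlongrightarrow> L) (inf sequentially (principal E))"
proof (rule tendsto_iff[THEN iffD2], intro allI impI)
  fix \<epsilon> :: real assume "\<epsilon> > 0"
  let ?D = "{n. norm (y n - L) > \<epsilon>/2}"
  have "?D \<in> I"
    using assms(3) half_gt_zero[OF \<open>\<epsilon> > 0\<close>] unfolding I_convergent_to_def by blast
  moreover have "E \<inter> ?D \<subseteq> ?D" by blast
  ultimately have "E \<inter> ?D \<in> I"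
    using \<open>is_ideal I\<close> unfolding is_ideal_def by blast
  then have "finite (E \<inter> ?D)" using no_infinite[rule_format, of "E \<inter> ?D"] by blast
  then obtain N where N: "E \<inter> ?D \<subseteq> {..<N}" using finite_nat_bounded by meson
  have "dist (y n) L < \<epsilon>" if "n \<ge> N" "n \<in> E" for n
  proof -
    have "n \<notin> ?D" using N that by auto
    with \<open>\<epsilon> > 0\<close> show ?thesis by (simp add: dist_norm)
  qed
  then show "\<forall>\<^sub>F n in inf sequentially (principal E). dist (y n) L < \<epsilon>"
    unfolding eventually_inf_principal eventually_sequentially by blast
qed

lemma enumerate_bounded_gaps_element_below:
  fixes E :: "nat set"
  assumes E: "infinite E" and B: "\<forall>n. enumerate E (Suc n) - enumerate E n \<le> B"
    and "enumerate E 0 \<le> n"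
  shows "\<exists>m\<in>E. m \<le> n \<and> n < m + B"
proof -
  have "\<exists>k. enumerate E k \<le> n \<and> n < enumerate E k + B"
    using \<open>enumerate E 0 \<le> n\<close>
  proof (induction n rule: dec_induct)
    case base
    have "enumerate E 0 < enumerate E 1" using enumerate_mono[OF _ E] by simp
    then show ?case using B[rule_format, of 0] by (intro exI[of _ 0]) auto
  next
    case (step n)
    then obtain k where k: "enumerate E k \<le> n" "n < enumerate E k + B" by auto
    have "enumerate E k < enumerate E (Suc k)" using enumerate_mono[OF _ E] by simp
    with k B[rule_format, of k] show ?case
      by (cases "Suc n < enumerate E k + B") (auto intro: exI[of _ "Suc k"] exI[of _ k])
  qed
  then show ?thesis using enumerate_in_set[OF E] by blast
qed

text \<open>Every index lies less than \<open>B\<close> steps after an element of \<open>E\<close>, so the partial sums differ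
  from those along \<open>E\<close> by at most \<open>B\<close> terms.\<close>

lemma LIMSEQ_partial_sums_if_tendsto_along:
  fixes x :: "nat \<Rightarrow> 'a::real_normed_vector"
  assumes "x \<longlonglongrightarrow> 0" and E: "infinite E" and B: "\<forall>n. enumerate E (Suc n) - enumerate E n \<le> B"
    and along: "(partial_sums x \<longlongrightarrow> L) (inf sequentially (principal E))"
  shows "partial_sums x \<longlonglongrightarrow> L"
proof (rule LIMSEQ_I)
  fix r :: real assume "r > 0"
  obtain N1 where N1: "\<And>m. m \<ge> N1 \<Longrightarrow> m \<in> E \<Longrightarrow> norm (partial_sums x m - L) < r/2"
    using along[unfolded tendsto_iff, rule_format, of "r/2"] \<open>r > 0\<close>
    by (auto simp: eventually_inf_principal eventually_sequentially dist_norm)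
  obtain N2 where N2: "\<And>i. i \<ge> N2 \<Longrightarrow> norm (x i) < r / (2 * Suc B)"
    using LIMSEQ_D[OF \<open>x \<longlonglongrightarrow> 0\<close>, of "r / (2 * Suc B)"] \<open>r > 0\<close> by auto
  show "\<exists>no. \<forall>n\<ge>no. norm (partial_sums x n - L) < r"
  proof (intro exI allI impI)
    fix n assume n: "enumerate E 0 + N1 + N2 + B \<le> n"
    then obtain m where m: "m \<in> E" "m \<le> n" "n < m + B"
      using enumerate_bounded_gaps_element_below[OF E B, of n] by auto
    have "norm (sum x {m<..n}) \<le> (\<Sum>i\<in>{m<..n}. norm (x i))" by (rule norm_sum)
    also have "\<dots> \<le> (\<Sum>i\<in>{m<..n}. r / (2 * Suc B))"
      using N2 m n by (intro sum_mono) (auto intro: less_imp_le)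
    also have "\<dots> = real (n - m) * (r / (2 * Suc B))" by simp
    also have "\<dots> \<le> real (Suc B) * (r / (2 * Suc B))"
      using m \<open>r > 0\<close> by (intro mult_right_mono) auto
    also have "\<dots> = r/2" by (simp add: field_simps)
    finally have "norm (sum x {m<..n}) \<le> r/2" .
    moreover have "norm (partial_sums x m - L) < r/2" using N1 m n by auto
    ultimately show "norm (partial_sums x n - L) < r"
      using partial_sums_split[OF m(2), of x] norm_triangle_ineq[of "partial_sums x m - L" "sum x {m<..n}"]
      by (simp add: algebra_simps)
  qed
qed

lemma infinite_norm_ge_if_not_LIMSEQ_zero:
  fixes x :: "nat \<Rightarrow> 'a::real_normed_vector"
  assumes "\<not> x \<longlonglongrightarrow> 0"
  obtains \<delta> where "\<delta> > 0" "infinite {i. \<delta> \<le> norm (x i)}"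
proof -
  have "\<exists>\<delta>>0. infinite {i. \<delta> \<le> norm (x i)}"
  proof (rule ccontr)
    assume none: "\<not> ?thesis"
    have "\<exists>N. \<forall>i\<ge>N. norm (x i - 0) < \<delta>" if "\<delta> > 0" for \<delta>
    proof -
      obtain N where "{i. \<delta> \<le> norm (x i)} \<subseteq> {..<N}"
        using none \<open>\<delta> > 0\<close> finite_nat_bounded by blast
      then have "\<forall>i\<ge>N. norm (x i - 0) < \<delta>" by (auto simp: subset_eq not_le)
      then show ?thesis by blast
    qed
    with assms show False unfolding LIMSEQ_iff by blast
  qed
  with that show thesis by blast
qed

lemma disjoint_blocks_between:
  fixes E S :: "nat set"
  assumes "infinite E" "infinite S"
  obtains a b g :: "nat \<Rightarrow> nat" where
    "\<And>j. a j \<in> E" "\<And>j. b j \<in> E" "\<And>j. j \<le> a j" "\<And>j. g j \<in> S" "\<And>j. g j \<in> {a j<..b j}"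
    "\<And>j j'. j \<noteq> j' \<Longrightarrow> g j \<notin> {a j'<..b j'}"
proof -
  have "\<exists>l u v. l \<in> E \<and> u \<in> S \<and> v \<in> E \<and> h \<le> l \<and> l < u \<and> u \<le> v" for h
  proof -
    obtain l where "l \<in> E" "h \<le> l" using \<open>infinite E\<close> by (meson infinite_nat_iff_unbounded_le)
    moreover obtain u where "u \<in> S" "l < u" using \<open>infinite S\<close> by (meson infinite_nat_iff_unbounded)
    moreover obtain v where "v \<in> E" "u \<le> v" using \<open>infinite E\<close> by (meson infinite_nat_iff_unbounded_le)
    ultimately show ?thesis by blast
  qed
  then obtain L U V where LUV: "\<And>h. L h \<in> E \<and> U h \<in> S \<and> V h \<in> E \<and> h \<le> L h \<and> L h < U h \<and> U h \<le> V h"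
    by metis
  define start where "start = rec_nat 0 (\<lambda>_. V)"
  define a where "a j = L (start j)" for j
  define b where "b j = V (start j)" for j
  define g where "g j = U (start j)" for j
  have b_le_a: "b j \<le> a (Suc j)" for j
    using LUV[of "start (Suc j)"] by (simp add: a_def b_def start_def)
  have a_lt_g: "a j < g j" and g_le_b: "g j \<le> b j" for j
    using LUV[of "start j"] by (auto simp: a_def b_def g_def)
  have "strict_mono a"
    unfolding strict_mono_Suc_iff using a_lt_g g_le_b b_le_a by (meson less_le_trans order.trans)
  then have a_mono: "j < j' \<Longrightarrow> a (Suc j) \<le> a j'" for j j'
    by (simp add: strict_mono_less_eq)
  show thesis
  proof (rule that)
    show "g j \<notin> {a j'<..b j'}" if "j \<noteq> j'" for j j'
      using that a_mono[of j j'] a_mono[of j' j] a_lt_g[of j] g_le_b[of j] b_le_a[of j] b_le_a[of j']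
      by (cases "j < j'") auto
  qed (use LUV a_lt_g g_le_b seq_suble[OF \<open>strict_mono a\<close>] in \<open>auto simp: a_def b_def g_def\<close>)
qed

lemma eventually_norm_block_sum_less:
  fixes y :: "nat \<Rightarrow> 'a::real_normed_vector"
  assumes along: "(partial_sums y \<longlongrightarrow> L) (inf sequentially (principal E))"
    and "\<And>j. a j \<in> E" "\<And>j. b j \<in> E" "\<And>j. j \<le> a j" "\<And>j. a j \<le> b j" and "\<epsilon> > 0"
  shows "\<forall>\<^sub>F j in sequentially. norm (sum y {a j<..b j}) < \<epsilon>"
proof -
  obtain N where N: "\<And>m. m \<ge> N \<Longrightarrow> m \<in> E \<Longrightarrow> norm (partial_sums y m - L) < \<epsilon>/2"
    using along[unfolded tendsto_iff, rule_format, of "\<epsilon>/2"] \<open>\<epsilon> > 0\<close>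
    by (auto simp: eventually_inf_principal eventually_sequentially dist_norm)
  have "norm (sum y {a j<..b j}) < \<epsilon>" if "j \<ge> N" for j
  proof -
    have split: "sum y {a j<..b j} = (partial_sums y (b j) - L) - (partial_sums y (a j) - L)"
      using partial_sums_split[OF assms(5), of y] by simp
    have "norm (partial_sums y (a j) - L) < \<epsilon>/2" "norm (partial_sums y (b j) - L) < \<epsilon>/2"
      using N assms(2-5)[of j] that by (meson order.trans)+
    then show ?thesis
      unfolding split using norm_triangle_ineq4[of "partial_sums y (b j) - L" "partial_sums y (a j) - L"] by linarith
  qed
  then show ?thesis unfolding eventually_sequentially by blast
qed

theorem theorem4p5:
  fixes I :: "nat set set" and x :: "nat \<Rightarrow> 'a::real_normed_vector"
  assumes "is_ideal I" and "I \<noteq> Fin_ideal"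
    and "\<exists>E::nat set. infinite E \<and>
           (\<forall>F. F \<subseteq> E \<and> infinite F \<longrightarrow> F \<notin> I) \<and>
           (\<exists>B::nat. \<forall>n. enumerate E (Suc n) - enumerate E n \<le> B)"
    and "\<not> convergent (partial_sums x)"
    and "series_I_convergent I x"
  shows "\<exists>N \<in> null_sets cantor_measure. A_set I x \<subseteq> N"
proof -
  obtain E B where E: "infinite E" and no_infinite: "\<forall>F. F \<subseteq> E \<and> infinite F \<longrightarrow> F \<notin> I"
    and B: "\<forall>n. enumerate E (Suc n) - enumerate E n \<le> B"
    using assms(3) by blast
  note along = tendsto_along_if_I_convergent_to[OF \<open>is_ideal I\<close> no_infinite]
  obtain L where "I_convergent_to I (partial_sums x) L"
    using assms(5) unfolding series_I_convergent_def I_convergent_def by blast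
  then have "\<not> x \<longlonglongrightarrow> 0"
    using LIMSEQ_partial_sums_if_tendsto_along[OF _ E B along] assms(4) by (auto simp: convergent_def)
  then obtain \<delta> where "\<delta> > 0" and big: "infinite {i. \<delta> \<le> norm (x i)}"
    by (rule infinite_norm_ge_if_not_LIMSEQ_zero)
  obtain a b g where ab: "\<And>j. a j \<in> E" "\<And>j. b j \<in> E" "\<And>j. j \<le> a j"
    and g: "\<And>j. g j \<in> {i. \<delta> \<le> norm (x i)}" "\<And>j. g j \<in> {a j<..b j}"
      "\<And>j j'. j \<noteq> j' \<Longrightarrow> g j \<notin> {a j'<..b j'}"
    using disjoint_blocks_between[OF E big] by metis
  have a_le_b: "a j \<le> b j" for j using g(2)[of j] by simp
  have "A_set I x \<subseteq> {t. \<forall>\<^sub>F j in sequentially. norm (block_sum x {a j<..b j} t) < \<delta>/2}"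
  proof
    fix t assume "t \<in> A_set I x"
    then obtain L' where "I_convergent_to I (partial_sums (\<lambda>n. (if t n then 1 else 0) *\<^sub>R x n)) L'"
      unfolding A_set_def series_I_convergent_def I_convergent_def by blast
    from eventually_norm_block_sum_less[OF along[OF this] ab a_le_b, where \<epsilon>="\<delta>/2"] \<open>\<delta> > 0\<close>
    show "t \<in> {t. \<forall>\<^sub>F j in sequentially. norm (block_sum x {a j<..b j} t) < \<delta>/2}"
      by (simp add: block_sum_def)
  qed
  moreover have "{t. \<forall>\<^sub>F j in sequentially. norm (block_sum x {a j<..b j} t) < \<delta>/2} \<in> null_sets cantor_measure"
    using g by (intro null_sets_eventually_small_block_sums[where W="\<lambda>j. {a j<..b j}" and g=g]) auto
  ultimately show ?thesis by blast
qed

end
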